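(* Let $n\ge2$ be even and $Q(x)=\sum_{i=1}^{n/2-1}Tr_1^n(x^{2^i+1})+Tr_1^{n/2}(x^{2^{n/2}+1})$ on $\mathbb{F}_{2^n}$. Then $Q$ is bent but not negabent.
   Context: $Tr_1^m(z)=z+z^2+\dots+z^{2^{m-1}}$; $Tr=Tr_1^n$. Fix a self-dual basis $\{\alpha_i\}$ of $\mathbb{F}_{2^n}$ over $\mathbb{F}_2$ ($Tr(\alpha_i\alpha_j)=\delta_{ij}$), identify $\mathbb{F}_{2^n}$ with $\mathbb{F}_2^n$ via coordinates, and let $wt(x)$ be the number of nonzero coordinates. For $g:\mathbb{F}_{2^n}\to\mathbb{F}_2$: $g$ is bent if $\left|\sum_x(-1)^{g(x)+Tr(\mu x)}\right|=2^{n/2}$ for all $\mu$; negabent if $\left|\sum_x(-1)^{g(x)+Tr(\mu x)}\mathrm{i}^{wt(x)}\right|=2^{n/2}$ for all $\mu$ ($\mathrm{i}=\sqrt{-1}$). *)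

theory Defs
  imports Complex_Main
begin

text \<open>The field F_{2^n} is modelled by a finite field type 'a with CARD('a) = 2^n.
  F_2 is identified with the prime subfield {0,1} of 'a.\<close>

definition trm :: "nat \<Rightarrow> 'a::field \<Rightarrow> 'a" where
  "trm m z = (\<Sum>k<m. z ^ (2 ^ k))"

definition sgn2 :: "'a::field \<Rightarrow> complex" where
  "sgn2 y = (if y = 0 then 1 else -1)"

definition is_basis :: "nat \<Rightarrow> (nat \<Rightarrow> 'a::field) \<Rightarrow> bool" where
  "is_basis n alpha \<longleftrightarrow>
     (\<forall>x::'a. \<exists>!c::nat \<Rightarrow> bool. (\<forall>i\<ge>n. \<not> c i) \<and>
        x = (\<Sum>i<n. if c i then alpha i else 0))"

definition self_dual_basis :: "nat \<Rightarrow> (nat \<Rightarrow> 'a::field) \<Rightarrow> bool" where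
  "self_dual_basis n alpha \<longleftrightarrow> is_basis n alpha \<and>
     (\<forall>i<n. \<forall>j<n. trm n (alpha i * alpha j) = (if i = j then 1 else 0))"

definition coords :: "nat \<Rightarrow> (nat \<Rightarrow> 'a::field) \<Rightarrow> 'a \<Rightarrow> nat \<Rightarrow> bool" where
  "coords n alpha x = (THE c. (\<forall>i\<ge>n. \<not> c i) \<and> x = (\<Sum>i<n. if c i then alpha i else 0))"

definition wt :: "nat \<Rightarrow> (nat \<Rightarrow> 'a::field) \<Rightarrow> 'a \<Rightarrow> nat" where
  "wt n alpha x = card {i. i < n \<and> coords n alpha x i}"

definition boolean_fun :: "('a::field \<Rightarrow> 'a) \<Rightarrow> bool" where
  "boolean_fun g \<longleftrightarrow> (\<forall>x. g x = 0 \<or> g x = 1)"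

definition bent :: "nat \<Rightarrow> ('a::{field,finite} \<Rightarrow> 'a) \<Rightarrow> bool" where
  "bent n g \<longleftrightarrow> boolean_fun g \<and>
     (\<forall>mu::'a. cmod (\<Sum>x\<in>UNIV. sgn2 (g x + trm n (mu * x))) = 2 powr (real n / 2))"

definition negabent :: "nat \<Rightarrow> (nat \<Rightarrow> 'a::{field,finite}) \<Rightarrow> ('a \<Rightarrow> 'a) \<Rightarrow> bool" where
  "negabent n alpha g \<longleftrightarrow> boolean_fun g \<and>
     (\<forall>mu::'a. cmod (\<Sum>x\<in>UNIV. sgn2 (g x + trm n (mu * x)) * \<i> ^ wt n alpha x)
                 = 2 powr (real n / 2))"

definition Qfun :: "nat \<Rightarrow> 'a::field \<Rightarrow> 'a" where
  "Qfun n x = (\<Sum>i\<in>{1..n div 2 - 1}. trm n (x ^ (2 ^ i + 1)))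
              + trm (n div 2) (x ^ (2 ^ (n div 2) + 1))"

end

theory Submission
  imports Defs "HOL-Computational_Algebra.Primes" "HOL-Number_Theory.Residues"
begin

text \<open>
  The function \<open>Q\<close> is quadratic: \<open>Q (x + a) = Q x + Q a + Tr (x * (Tr a + a))\<close>, and for even \<open>n\<close>
  the linear map \<open>a \<mapsto> Tr a + a\<close> is injective because \<open>Tr 1 = 0\<close>. Squaring the Walsh coefficient and
  summing the resulting additive character over \<open>x\<close> then gives \<open>2 ^ n\<close>, so \<open>Q\<close> is bent.

  With respect to a self-dual basis the coordinates of \<open>x\<close> are the traces \<open>Tr (\<alpha>\<^sub>j * x)\<close>, hence
  \<open>\<i> ^ wt (x + a) = \<i> ^ wt x * \<i> ^ wt a * (-1) ^ Tr (x * a)\<close>. Together with the polar form this makes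
  \<open>\<phi> x = (-1) ^ Q x * \<i> ^ wt x * cnj (\<i> ^ Tr x)\<close> an additive character, so its Walsh coefficients
  are \<open>0\<close> or \<open>2 ^ n\<close>, and \<open>2 ^ n\<close> at some \<open>v\<close>. Writing \<open>\<i> ^ Tr x = ((1 + \<i>) + (1 - \<i>) * (-1) ^ Tr x) / 2\<close>,
  the nega-Hadamard coefficient of \<open>Q\<close> at \<open>v\<close> is \<open>(1 + \<i>) / 2 * 2 ^ n\<close> or \<open>2 ^ n\<close>, whose modulus is
  not \<open>2 ^ (n / 2)\<close> when \<open>n \<ge> 2\<close>.
\<close>

section \<open>Fields of characteristic two\<close>

definition F2 :: "'a::field set" where
  "F2 = {0, 1}"

lemma zero_in_F2 [simp]: "0 \<in> F2" and one_in_F2 [simp]: "1 \<in> F2"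
  by (simp_all add: F2_def)

lemma F2_mult: "u \<in> F2 \<Longrightarrow> v \<in> F2 \<Longrightarrow> u * v \<in> F2"
  by (auto simp: F2_def)

lemma F2_iff_square_eq: "u \<in> F2 \<longleftrightarrow> u ^ 2 = u"
proof
  assume "u ^ 2 = u"
  then have "u * (u - 1) = 0" by (simp add: power2_eq_square algebra_simps)
  then show "u \<in> F2" by (auto simp: F2_def)
qed (auto simp: F2_def)

lemma sgn2_mult_self [simp]: "sgn2 u * sgn2 u = 1"
  by (simp add: sgn2_def)

definition imag_pow :: "'a::field \<Rightarrow> complex" where
  "imag_pow u = (if u = 0 then 1 else \<i>)"

lemma imag_pow_eq_sgn2: "u \<in> F2 \<Longrightarrow> imag_pow u = ((1 + \<i>) + (1 - \<i>) * sgn2 u) / 2"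
  by (auto simp: F2_def imag_pow_def sgn2_def field_simps)

lemma imag_pow_mult_cnj [simp]: "imag_pow u * cnj (imag_pow u) = 1"
  by (simp add: imag_pow_def)

lemma trm_zero [simp]: "trm m 0 = 0"
  by (simp add: trm_def power_0_left)

lemma trm_mult_F2: "c \<in> F2 \<Longrightarrow> trm m (c * y) = c * trm m y"
  by (auto simp: F2_def)

lemma sum_lessThan_add: "(\<Sum>k<a + b::nat. f k) = (\<Sum>k<a. f k) + (\<Sum>k<b. f (a + k))"
  by (induction b) (simp_all add: algebra_simps)

lemma trm_double: "trm (m + m) z = trm m z + trm m (z ^ (2 ^ m))"
  by (simp add: trm_def sum_lessThan_add power_add flip: power_mult)

lemma sum_lessThan_double_split:
  fixes f :: "nat \<Rightarrow> 'b::comm_monoid_add"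
  assumes "m \<ge> 1"
  shows "(\<Sum>k<m + m. f k) = f 0 + f m + (\<Sum>i\<in>{1..m - 1}. f i + f (m + m - i))"
proof -
  have "{..<m} = insert 0 {1..m - 1}" and "{..<m} = insert 0 {1..<m}" and "{1..<m} = {1..m - 1}"
    using assms by auto
  then have "(\<Sum>k<m. f k) = f 0 + (\<Sum>i\<in>{1..m - 1}. f i)"
    and "(\<Sum>k<m. f (m + k)) = f m + (\<Sum>k\<in>{1..<m}. f (m + k))"
    by simp_all
  moreover have "(\<Sum>k\<in>{1..<m}. f (m + k)) = (\<Sum>i\<in>{1..m - 1}. f (m + m - i))"
    unfolding \<open>{1..<m} = {1..m - 1}\<close>
    by (rule sum.reindex_bij_witness[of _ "\<lambda>i. m - i" "\<lambda>k. m - k"]) auto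
  ultimately show ?thesis
    by (simp add: sum_lessThan_add sum.distrib algebra_simps)
qed

lemma Qfun_zero [simp]: "Qfun n 0 = 0"
  by (simp add: Qfun_def power_0_left)

context
  assumes CHAR_2: "CHAR('a::field) = 2"
begin

lemma two_eq_zero_CHAR_2 [simp]: "(2::'a) = 0"
  using of_nat_CHAR[where 'a='a] CHAR_2 by simp

lemma add_self_CHAR_2 [simp]: "(x::'a) + x = 0"
  by (metis mult_2 two_eq_zero_CHAR_2 mult_zero_left)

lemma F2_add: "(u::'a) \<in> F2 \<Longrightarrow> v \<in> F2 \<Longrightarrow> u + v \<in> F2"
  by (auto simp: F2_def)

lemma F2_sum: "(\<And>i. i \<in> A \<Longrightarrow> (f i::'a) \<in> F2) \<Longrightarrow> (\<Sum>i\<in>A. f i) \<in> F2"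
  by (induction A rule: infinite_finite_induct) (simp_all add: F2_add)

lemma sgn2_add: "u \<in> F2 \<Longrightarrow> v \<in> F2 \<Longrightarrow> sgn2 ((u::'a) + v) = sgn2 u * sgn2 v"
  by (auto simp: F2_def sgn2_def)

lemma sgn2_sum: "(\<And>i. i \<in> A \<Longrightarrow> (f i::'a) \<in> F2) \<Longrightarrow> sgn2 (\<Sum>i\<in>A. f i) = (\<Prod>i\<in>A. sgn2 (f i))"
  by (induction A rule: infinite_finite_induct) (simp_all add: sgn2_add F2_sum, simp_all add: sgn2_def)

lemma imag_pow_add:
  "(u::'a) \<in> F2 \<Longrightarrow> v \<in> F2 \<Longrightarrow> imag_pow (u + v) = imag_pow u * imag_pow v * sgn2 (u * v)"
  by (auto simp: F2_def imag_pow_def sgn2_def)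

lemma power_2_power_add: "((x::'a) + y) ^ (2 ^ k) = x ^ (2 ^ k) + y ^ (2 ^ k)"
  using freshmans_dream'[of "2 ^ k" k x y] CHAR_2 by simp

lemma power_2_power_sum: "(\<Sum>i\<in>A. (f i::'a)) ^ (2 ^ k) = (\<Sum>i\<in>A. f i ^ (2 ^ k))"
  using freshmans_dream_sum'[of "2 ^ k" k f A] CHAR_2 by simp

lemma power_2_power_plus_1_add:
  "((x::'a) + a) ^ (2 ^ i + 1) = x ^ (2 ^ i + 1) + a ^ (2 ^ i + 1) + (x ^ (2 ^ i) * a + a ^ (2 ^ i) * x)"
  by (simp add: power_2_power_add algebra_simps)

lemma trm_add: "trm m ((x::'a) + y) = trm m x + trm m y"
  by (simp add: trm_def power_2_power_add sum.distrib)

lemma trm_sum: "trm m (\<Sum>i\<in>A. (f i::'a)) = (\<Sum>i\<in>A. trm m (f i))"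
  by (induction A rule: infinite_finite_induct) (simp_all add: trm_add)

lemma trm_power_2_power: "trm m (z::'a) ^ (2 ^ k) = trm m (z ^ (2 ^ k))"
  by (simp add: trm_def power_2_power_sum flip: power_mult) (simp add: mult.commute)

lemma trm_square: "trm m (z::'a) ^ 2 = trm m z + z + z ^ (2 ^ m)"
proof -
  have "trm m z ^ 2 = (\<Sum>k<m. z ^ (2 ^ Suc k))"
    using trm_power_2_power[of m z 1] by (simp add: trm_def flip: power_mult)
  moreover have "(\<Sum>k<Suc m. z ^ (2 ^ k)) = z + (\<Sum>k<m. z ^ (2 ^ Suc k))"
    unfolding sum.lessThan_Suc_shift by simp
  ultimately have "trm m z ^ 2 + z = (\<Sum>k<Suc m. z ^ (2 ^ k))"
    by (simp add: add.commute)
  also have "\<dots> = trm m z + z ^ (2 ^ m)"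
    by (simp add: trm_def)
  finally have "trm m z ^ 2 + z + z = trm m z + z ^ (2 ^ m) + z"
    by simp
  then show ?thesis
    by (simp add: add.assoc add.commute add.left_commute)
qed

lemma trm_in_F2_if_fixed: "(z::'a) ^ (2 ^ m) = z \<Longrightarrow> trm m z \<in> F2"
  by (simp add: F2_iff_square_eq trm_square)

lemma trm_one_if_even: "even m \<Longrightarrow> trm m (1::'a) = 0"
  by (auto simp: trm_def elim!: evenE)

end

section \<open>Fields of order \<open>2 ^ n\<close> and the quadratic function\<close>

lemma CHAR_eq_2_if_card_power_2:
  assumes "card (UNIV :: 'a::{field,finite} set) = 2 ^ n"
  shows "CHAR('a) = 2"
proof -
  have "prime CHAR('a)"
    using prime_CHAR_semidom finite_imp_CHAR_pos[where 'a='a] by simp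
  moreover have "CHAR('a) dvd 2 ^ n"
    using CHAR_dvd_CARD[where 'a='a] assms by simp
  ultimately show ?thesis
    by (metis prime_dvd_power primes_dvd_imp_eq two_is_prime_nat)
qed

lemma power_card_UNIV_eq_self:
  fixes x :: "'a::{field,finite}"
  shows "x ^ card (UNIV :: 'a set) = x"
proof (cases "x = 0")
  case False
  let ?U = "UNIV - {0 :: 'a}"
  have "(\<Prod>y\<in>?U. y) = (\<Prod>y\<in>?U. x * y)"
    by (rule prod.reindex_bij_witness[of _ "\<lambda>y. x * y" "\<lambda>y. y / x"]) (use False in auto)
  also have "\<dots> = x ^ card ?U * (\<Prod>y\<in>?U. y)"
    by (simp add: prod.distrib)
  finally have "x ^ card ?U = 1"
    by simp
  moreover have "card (UNIV :: 'a set) = Suc (card ?U)"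
    by (rule card_Suc_Diff1[OF finite_UNIV UNIV_I, symmetric])
  ultimately show ?thesis
    by (simp only: power_Suc mult_1_right)
qed (simp add: finite_UNIV_card_ge_0)

context
  fixes n :: nat
  assumes card_UNIV: "card (UNIV :: 'a::{field,finite} set) = 2 ^ n"
begin

lemma CHAR_eq_2: "CHAR('a) = 2"
  using card_UNIV by (rule CHAR_eq_2_if_card_power_2)

lemma exponent_pos: "n > 0"
  using CHAR_dvd_CARD[where 'a='a] card_UNIV CHAR_eq_2 by (cases n) auto

lemma power_2_power_self: "(x::'a) ^ (2 ^ n) = x"
  using power_card_UNIV_eq_self[of x] card_UNIV by simp

lemma trm_in_F2: "trm n (y::'a) \<in> F2"
  by (rule trm_in_F2_if_fixed[OF CHAR_eq_2 power_2_power_self])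

lemma trm_power_2_power_eq: "trm n ((y::'a) ^ (2 ^ j)) = trm n y"
  using trm_power_2_power[OF CHAR_eq_2, of n y j] trm_in_F2[of y] by (auto simp: F2_def power_0_left)

lemma trm_mult_power_swap:
  assumes "i \<le> n"
  shows "trm n ((x::'a) ^ (2 ^ i) * a) = trm n (x * a ^ (2 ^ (n - i)))"
proof -
  have "(2::nat) ^ (n - i) * 2 ^ i = 2 ^ n"
    using assms by (simp flip: power_add)
  then have "(x * a ^ (2 ^ (n - i))) ^ (2 ^ i) = x ^ (2 ^ i) * a"
    by (simp add: power_mult_distrib power_2_power_self flip: power_mult)
  then show ?thesis
    using trm_power_2_power_eq[of "x * a ^ (2 ^ (n - i))" i] by simp
qed

lemma trm_power_2_power_plus_1_polar:
  assumes "i \<le> n"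
  shows "trm n (((x::'a) + a) ^ (2 ^ i + 1))
    = trm n (x ^ (2 ^ i + 1)) + trm n (a ^ (2 ^ i + 1)) + trm n (x * (a ^ (2 ^ i) + a ^ (2 ^ (n - i))))"
  unfolding power_2_power_plus_1_add[OF CHAR_eq_2] trm_add[OF CHAR_eq_2] distrib_left
    trm_mult_power_swap[OF assms] mult.commute[of "a ^ 2 ^ i" x]
  by (simp only: add.commute add.left_commute add.assoc)

context
  assumes even_n: "even n"
begin

lemma half_add_half: "n div 2 + n div 2 = n"
  using even_n by auto

lemma trm_half_polar:
  "trm (n div 2) (((x::'a) + a) ^ (2 ^ (n div 2) + 1))
    = trm (n div 2) (x ^ (2 ^ (n div 2) + 1)) + trm (n div 2) (a ^ (2 ^ (n div 2) + 1))
      + trm n (x * a ^ (2 ^ (n div 2)))"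
proof -
  let ?m = "n div 2" and ?z = "x * a ^ (2 ^ (n div 2))"
  have "?z ^ (2 ^ ?m) = x ^ (2 ^ ?m) * a ^ (2 ^ n)"
    using half_add_half by (simp add: power_mult_distrib flip: power_mult power_add)
  then have "?z ^ (2 ^ ?m) = x ^ (2 ^ ?m) * a"
    by (simp add: power_2_power_self)
  then have "trm ?m (x ^ (2 ^ ?m) * a) + trm ?m (a ^ (2 ^ ?m) * x) = trm n ?z"
    using trm_double[of ?m ?z] half_add_half by (simp add: add.commute mult.commute)
  then show ?thesis
    unfolding power_2_power_plus_1_add[OF CHAR_eq_2] trm_add[OF CHAR_eq_2] by simp
qed

lemma trm_add_self_eq_paired_sum:
  "trm n (a::'a) + a = a ^ (2 ^ (n div 2)) + (\<Sum>i\<in>{1..n div 2 - 1}. a ^ (2 ^ i) + a ^ (2 ^ (n - i)))"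
proof -
  have "n div 2 \<ge> 1"
    using exponent_pos even_n by auto
  then have "trm n a = a + a ^ (2 ^ (n div 2)) + (\<Sum>i\<in>{1..n div 2 - 1}. a ^ (2 ^ i) + a ^ (2 ^ (n - i)))"
    using sum_lessThan_double_split[of "n div 2" "\<lambda>k. a ^ (2 ^ k)"] half_add_half
    by (simp add: trm_def)
  then have "trm n a + a = a ^ (2 ^ (n div 2)) + (\<Sum>i\<in>{1..n div 2 - 1}. a ^ (2 ^ i) + a ^ (2 ^ (n - i))) + (a + a)"
    by (simp add: ac_simps)
  then show ?thesis
    by (simp add: add_self_CHAR_2[OF CHAR_eq_2])
qed

lemma Qfun_polar: "Qfun n ((x::'a) + a) = Qfun n x + Qfun n a + trm n (x * (trm n a + a))"
proof -
  let ?I = "{1..n div 2 - 1}"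
  have "(\<Sum>i\<in>?I. trm n ((x + a) ^ (2 ^ i + 1)))
      = (\<Sum>i\<in>?I. trm n (x ^ (2 ^ i + 1)) + trm n (a ^ (2 ^ i + 1))
          + trm n (x * (a ^ (2 ^ i) + a ^ (2 ^ (n - i)))))"
    by (rule sum.cong[OF refl], rule trm_power_2_power_plus_1_polar) auto
  also have "\<dots> = (\<Sum>i\<in>?I. trm n (x ^ (2 ^ i + 1))) + (\<Sum>i\<in>?I. trm n (a ^ (2 ^ i + 1)))
        + trm n (x * (\<Sum>i\<in>?I. a ^ (2 ^ i) + a ^ (2 ^ (n - i))))"
    by (simp add: sum.distrib sum_distrib_left distrib_left trm_sum[OF CHAR_eq_2] trm_add[OF CHAR_eq_2])
  finally have sums: "(\<Sum>i\<in>?I. trm n ((x + a) ^ (2 ^ i + 1))) = \<dots>" .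
  have cross: "trm n (x * (trm n a + a))
      = trm n (x * (\<Sum>i\<in>?I. a ^ (2 ^ i) + a ^ (2 ^ (n - i)))) + trm n (x * a ^ (2 ^ (n div 2)))"
    unfolding trm_add_self_eq_paired_sum distrib_left trm_add[OF CHAR_eq_2] by (rule add.commute)
  show ?thesis
    unfolding Qfun_def trm_half_polar sums cross by (simp only: ac_simps)
qed

lemma Qfun_in_F2: "Qfun n (x::'a) \<in> F2"
proof -
  let ?N = "x ^ (2 ^ (n div 2) + 1)"
  have "?N ^ (2 ^ (n div 2)) = x ^ (2 ^ n) * x ^ (2 ^ (n div 2))"
    using half_add_half by (simp add: power_mult_distrib add.commute flip: power_mult power_add)
  then have "?N ^ (2 ^ (n div 2)) = ?N"
    by (simp add: power_2_power_self mult.commute)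
  then have "trm (n div 2) ?N \<in> F2"
    by (rule trm_in_F2_if_fixed[OF CHAR_eq_2])
  then show ?thesis
    unfolding Qfun_def by (intro F2_add[OF CHAR_eq_2] F2_sum[OF CHAR_eq_2] trm_in_F2)
qed

lemma trm_add_self_eq_0_iff: "trm n (a::'a) + a = 0 \<longleftrightarrow> a = 0"
proof
  assume "trm n a + a = 0"
  then have "a = trm n a"
    by (metis add_self_CHAR_2[OF CHAR_eq_2] add_right_cancel)
  then show "a = 0"
    using trm_in_F2[of a] trm_one_if_even[OF CHAR_eq_2 even_n] by (auto simp: F2_def)
qed simp

end

end

section \<open>Walsh and nega-Hadamard transforms\<close>

lemma sum_character_eq_0:
  fixes psi :: "'a::group_add \<Rightarrow> complex"
  assumes hom: "\<And>x y. psi (x + y) = psi x * psi y" and "psi a \<noteq> 1"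
  shows "(\<Sum>x\<in>UNIV. psi x) = 0"
proof -
  have "(\<Sum>x\<in>UNIV. psi x) = (\<Sum>x\<in>UNIV. psi (x + a))"
    using sum.reindex_bij_betw[OF bij_plus_right, of psi a] by simp
  also have "\<dots> = psi a * (\<Sum>x\<in>UNIV. psi x)"
    by (simp add: hom sum_distrib_left mult.commute)
  finally have "(1 - psi a) * (\<Sum>x\<in>UNIV. psi x) = 0"
    by (simp add: algebra_simps)
  with assms(2) show ?thesis
    by simp
qed

lemma sum_character_cases:
  fixes psi :: "'a::group_add \<Rightarrow> complex"
  assumes "\<And>x y. psi (x + y) = psi x * psi y"
  shows "(\<Sum>x\<in>UNIV. psi x) = 0 \<or> (\<Sum>x\<in>UNIV. psi x) = of_nat (card (UNIV :: 'a set))"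
proof (cases "\<forall>x. psi x = 1")
  case False
  then show ?thesis
    using sum_character_eq_0[OF assms] by blast
qed simp

lemma norm_eq_2_powr_half_iff: "cmod z = 2 powr (real n / 2) \<longleftrightarrow> cmod z ^ 2 = 2 ^ n"
proof -
  have "2 powr (real n / 2) * 2 powr (real n / 2) = 2 powr (real n / 2 + real n / 2)"
    by (simp only: powr_add)
  also have "\<dots> = (2::real) ^ n"
    by (simp add: powr_realpow)
  finally have "(2 powr (real n / 2)) ^ 2 = (2::real) ^ n"
    by (simp only: power2_eq_square)
  then show ?thesis
    using power2_eq_imp_eq[of "cmod z" "2 powr (real n / 2)"] by auto
qed

locale self_dual_binary_field =
  fixes n :: nat and alpha :: "nat \<Rightarrow> 'a::{field,finite}"
  assumes card_UNIV: "card (UNIV :: 'a set) = 2 ^ n"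
    and self_dual: "self_dual_basis n alpha"
begin

lemmas CHAR_2 = CHAR_eq_2[OF card_UNIV]

lemma sgn2_trm_add: "sgn2 (trm n ((x::'a) + y)) = sgn2 (trm n x) * sgn2 (trm n y)"
  by (simp add: trm_add[OF CHAR_2] sgn2_add[OF CHAR_2] trm_in_F2[OF card_UNIV])

lemma trm_alpha_mult_alpha: "i < n \<Longrightarrow> j < n \<Longrightarrow> trm n (alpha i * alpha j) = (if i = j then 1 else 0)"
  using self_dual unfolding self_dual_basis_def by blast

lemma sum_sgn2_trm: "(\<Sum>v\<in>UNIV. sgn2 (trm n (v * (z::'a)))) = (if z = 0 then 2 ^ n else 0)"
proof (cases "z = 0")
  case True
  then show ?thesis
    using card_UNIV by (simp add: sgn2_def)
next
  case False
  have "trm n (alpha 0 * alpha 0 / z * z) = 1"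
    using trm_alpha_mult_alpha[of 0 0] exponent_pos[OF card_UNIV] False by simp
  then have "sgn2 (trm n (alpha 0 * alpha 0 / z * z)) \<noteq> 1"
    by (simp add: sgn2_def)
  then have "(\<Sum>v\<in>UNIV. sgn2 (trm n (v * z))) = 0"
    by (rule sum_character_eq_0[rotated]) (simp add: distrib_right sgn2_trm_add)
  then show ?thesis
    using False by simp
qed

lemma walsh_square_if_polar_nondegenerate:
  fixes g L :: "'a \<Rightarrow> 'a"
  assumes F2: "\<And>x. g x \<in> F2"
    and polar: "\<And>x a. g (x + a) = g x + g a + trm n (x * L a)"
    and nondegenerate: "\<And>a. L a = 0 \<longleftrightarrow> a = 0"
  shows "(\<Sum>x\<in>UNIV. sgn2 (g x + trm n (mu * x))) ^ 2 = 2 ^ n"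
proof -
  define chi where "chi x = sgn2 (g x + trm n (mu * x))" for x
  have "g 0 = 0"
    using polar[of 0 0] add_self_CHAR_2[OF CHAR_2] by (simp add: add.assoc)
  have F2_lin: "g x + trm n (mu * x) \<in> F2" for x
    by (rule F2_add[OF CHAR_2 F2 trm_in_F2[OF card_UNIV]])
  have shift: "chi x * chi (x + a) = chi a * sgn2 (trm n (x * L a))" for x a
  proof -
    have "g (x + a) + trm n (mu * (x + a))
        = (g x + trm n (mu * x)) + (g a + trm n (mu * a)) + trm n (x * L a)"
      unfolding polar distrib_left trm_add[OF CHAR_2] by (simp only: ac_simps)
    then have "chi (x + a) = chi x * chi a * sgn2 (trm n (x * L a))"
      unfolding chi_def
      by (simp add: sgn2_add[OF CHAR_2] F2_add[OF CHAR_2] F2_lin trm_in_F2[OF card_UNIV])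
    moreover have "chi x * chi x = 1"
      by (simp add: chi_def)
    ultimately show ?thesis
      by (metis mult.assoc mult.commute mult_1)
  qed
  have "(\<Sum>x\<in>UNIV. chi x) ^ 2 = (\<Sum>x\<in>UNIV. \<Sum>a\<in>UNIV. chi x * chi (x + a))"
    unfolding power2_eq_square sum_product
    by (intro sum.cong refl sum.reindex_bij_betw[OF bij_plus, symmetric])
  also have "\<dots> = (\<Sum>a\<in>UNIV. chi a * (\<Sum>x\<in>UNIV. sgn2 (trm n (x * L a))))"
    by (subst sum.swap) (simp add: shift sum_distrib_left)
  also have "\<dots> = (\<Sum>a\<in>UNIV. if a = (0::'a) then 2 ^ n else 0)"
    by (intro sum.cong refl) (simp add: sum_sgn2_trm nondegenerate, simp add: chi_def \<open>g 0 = 0\<close> sgn2_def)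
  also have "\<dots> = 2 ^ n"
    by simp
  finally show ?thesis
    unfolding chi_def .
qed

lemma bent_if_polar_nondegenerate:
  fixes g L :: "'a \<Rightarrow> 'a"
  assumes F2: "\<And>x. g x \<in> F2"
    and polar: "\<And>x a. g (x + a) = g x + g a + trm n (x * L a)"
    and nondegenerate: "\<And>a. L a = 0 \<longleftrightarrow> a = 0"
  shows "bent n g"
  unfolding bent_def boolean_fun_def norm_eq_2_powr_half_iff
proof (intro conjI allI)
  show "g x = 0 \<or> g x = 1" for x
    using F2[of x] by (simp add: F2_def)
  show "cmod (\<Sum>x\<in>UNIV. sgn2 (g x + trm n (mu * x))) ^ 2 = 2 ^ n" for mu
    unfolding norm_power[symmetric] walsh_square_if_polar_nondegenerate[OF assms] by (simp add: norm_power)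
qed

lemma trm_alpha_mult_expansion:
  assumes "(x::'a) = (\<Sum>i<n. if c i then alpha i else 0)" and "j < n"
  shows "trm n (alpha j * x) = (if c j then 1 else 0)"
proof -
  have "trm n (alpha j * x) = (\<Sum>i<n. if c i then trm n (alpha j * alpha i) else 0)"
    unfolding assms(1) sum_distrib_left trm_sum[OF CHAR_2] by (intro sum.cong) auto
  also have "\<dots> = (\<Sum>i<n. if i = j then (if c j then 1 else 0) else 0)"
    by (intro sum.cong) (use assms(2) trm_alpha_mult_alpha in auto)
  finally show ?thesis
    using assms(2) by simp
qed

lemma basis_expansion: "(x::'a) = (\<Sum>i<n. trm n (alpha i * x) * alpha i)"
proof -
  obtain c where c: "x = (\<Sum>i<n. if c i then alpha i else 0)"
    using self_dual unfolding self_dual_basis_def is_basis_def by blast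
  have "(\<Sum>i<n. trm n (alpha i * x) * alpha i) = (\<Sum>i<n. if c i then alpha i else 0)"
    by (intro sum.cong) (simp_all add: trm_alpha_mult_expansion[OF c])
  then show ?thesis
    using c by simp
qed

lemma coords_eq: "coords n alpha (x::'a) = (\<lambda>i. i < n \<and> trm n (alpha i * x) = 1)"
  unfolding coords_def
proof (rule the1_equality)
  show "\<exists>!c. (\<forall>i\<ge>n. \<not> c i) \<and> x = (\<Sum>i<n. if c i then alpha i else 0)"
    using self_dual unfolding self_dual_basis_def is_basis_def by blast
  have "x = (\<Sum>i<n. trm n (alpha i * x) * alpha i)"
    by (rule basis_expansion)
  also have "\<dots> = (\<Sum>i<n. if trm n (alpha i * x) = 1 then alpha i else 0)"
    by (intro sum.cong refl) (use trm_in_F2[OF card_UNIV] in \<open>auto simp: F2_def\<close>)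
  finally show "(\<forall>i\<ge>n. \<not> (i < n \<and> trm n (alpha i * x) = 1))
      \<and> x = (\<Sum>i<n. if i < n \<and> trm n (alpha i * x) = 1 then alpha i else 0)"
    by simp
qed

lemma trm_mult_eq_sum_coords: "trm n ((x::'a) * a) = (\<Sum>j<n. trm n (alpha j * x) * trm n (alpha j * a))"
proof -
  have "trm n (x * a) = trm n (\<Sum>j<n. trm n (alpha j * a) * (alpha j * x))"
    by (subst basis_expansion[of a]) (simp add: sum_distrib_left ac_simps)
  also have "\<dots> = (\<Sum>j<n. trm n (alpha j * a) * trm n (alpha j * x))"
    by (simp only: trm_sum[OF CHAR_2] trm_mult_F2[OF trm_in_F2[OF card_UNIV]])
  finally show ?thesis
    by (simp add: mult.commute)
qed

lemma imag_unit_power_wt: "\<i> ^ wt n alpha (x::'a) = (\<Prod>j<n. imag_pow (trm n (alpha j * x)))"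
proof -
  have "(\<Prod>j<n. imag_pow (trm n (alpha j * x))) = (\<Prod>j<n. if trm n (alpha j * x) = 1 then \<i> else 1)"
    using trm_in_F2[OF card_UNIV] by (intro prod.cong) (auto simp: imag_pow_def F2_def)
  also have "\<dots> = \<i> ^ card {j. j < n \<and> trm n (alpha j * x) = 1}"
    by (simp add: prod.If_cases Collect_conj_eq lessThan_def Int_commute)
  finally show ?thesis
    by (simp add: wt_def coords_eq)
qed

lemma imag_unit_power_wt_add:
  "\<i> ^ wt n alpha ((x::'a) + a) = \<i> ^ wt n alpha x * \<i> ^ wt n alpha a * sgn2 (trm n (x * a))"
proof -
  let ?t = "\<lambda>y j. trm n (alpha j * y)"
  have "\<i> ^ wt n alpha (x + a) = (\<Prod>j<n. imag_pow (?t x j) * imag_pow (?t a j) * sgn2 (?t x j * ?t a j))"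
    unfolding imag_unit_power_wt distrib_left trm_add[OF CHAR_2]
    by (intro prod.cong refl imag_pow_add[OF CHAR_2] trm_in_F2[OF card_UNIV])
  also have "\<dots> = \<i> ^ wt n alpha x * \<i> ^ wt n alpha a * (\<Prod>j<n. sgn2 (?t x j * ?t a j))"
    by (simp add: imag_unit_power_wt prod.distrib)
  also have "(\<Prod>j<n. sgn2 (?t x j * ?t a j)) = sgn2 (trm n (x * a))"
    unfolding trm_mult_eq_sum_coords[of x a]
    by (simp add: sgn2_sum[OF CHAR_2] F2_mult trm_in_F2[OF card_UNIV])
  finally show ?thesis .
qed

text \<open>The factor \<open>cnj (\<i> ^ Tr x)\<close> absorbs the cross term \<open>Tr x * Tr a\<close> of the polar form of \<open>Q\<close>,
  which makes \<open>twisted_sign\<close> an additive character.\<close>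

definition twisted_sign :: "'a \<Rightarrow> complex" where
  "twisted_sign x = sgn2 (Qfun n x) * \<i> ^ wt n alpha x * cnj (imag_pow (trm n x))"

definition twisted_walsh :: "'a \<Rightarrow> complex" where
  "twisted_walsh v = (\<Sum>x\<in>UNIV. twisted_sign x * sgn2 (trm n (v * x)))"

context
  assumes even_n: "even n"
begin

lemma Qfun_polar_trm:
  "Qfun n ((x::'a) + a) = Qfun n x + Qfun n a + (trm n x * trm n a + trm n (x * a))"
  using Qfun_polar[OF card_UNIV even_n, of x a]
  by (simp add: distrib_left trm_add[OF CHAR_2] mult.commute[of x "trm n a"]
      trm_mult_F2[OF trm_in_F2[OF card_UNIV]])

lemma twisted_sign_add: "twisted_sign (x + a) = twisted_sign x * twisted_sign a"
proof -
  let ?Q = "Qfun n :: 'a \<Rightarrow> 'a" and ?s = "sgn2 (trm n x * trm n a)" and ?t = "sgn2 (trm n (x * a))"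
  have F2: "trm n y \<in> F2" "?Q y \<in> F2" for y
    by (simp_all add: trm_in_F2[OF card_UNIV] Qfun_in_F2[OF card_UNIV even_n])
  have "sgn2 (?Q (x + a)) = sgn2 (?Q x) * sgn2 (?Q a) * (?s * ?t)"
    unfolding Qfun_polar_trm by (simp add: sgn2_add[OF CHAR_2] F2_add[OF CHAR_2] F2_mult F2)
  moreover have "cnj (imag_pow (trm n (x + a))) = cnj (imag_pow (trm n x)) * cnj (imag_pow (trm n a)) * ?s"
    by (simp add: trm_add[OF CHAR_2] imag_pow_add[OF CHAR_2] F2 sgn2_def)
  ultimately have "twisted_sign (x + a) = twisted_sign x * twisted_sign a * (?s * ?s) * (?t * ?t)"
    unfolding twisted_sign_def imag_unit_power_wt_add by (simp add: ac_simps)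
  then show ?thesis
    by simp
qed

lemma twisted_sign_zero: "twisted_sign 0 = 1"
  by (simp add: twisted_sign_def sgn2_def imag_pow_def wt_def coords_eq)

lemma twisted_walsh_cases: "twisted_walsh v = 0 \<or> twisted_walsh v = 2 ^ n"
  using sum_character_cases[of "\<lambda>x. twisted_sign x * sgn2 (trm n (v * x))"] card_UNIV
  by (simp add: twisted_walsh_def twisted_sign_add distrib_left sgn2_trm_add ac_simps)

lemma ex_twisted_walsh_eq: "\<exists>v. twisted_walsh v = 2 ^ n"
proof -
  have "(\<Sum>v\<in>UNIV. twisted_walsh v) = (\<Sum>x\<in>UNIV. twisted_sign x * (\<Sum>v\<in>UNIV. sgn2 (trm n (v * x))))"
    unfolding twisted_walsh_def by (subst sum.swap) (simp add: sum_distrib_left)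
  also have "\<dots> = (\<Sum>x\<in>UNIV. if x = (0::'a) then 2 ^ n else 0)"
    by (intro sum.cong refl) (simp add: sum_sgn2_trm twisted_sign_zero)
  also have "\<dots> = 2 ^ n"
    by simp
  finally have "(\<Sum>v\<in>UNIV. twisted_walsh v) \<noteq> 0"
    by simp
  then obtain v where "twisted_walsh v \<noteq> 0"
    by (meson sum.neutral)
  then show ?thesis
    using twisted_walsh_cases by blast
qed

lemma nega_hadamard_Qfun:
  "(\<Sum>x\<in>UNIV. sgn2 (Qfun n x + trm n (mu * x)) * \<i> ^ wt n alpha x)
    = (1 + \<i>) / 2 * twisted_walsh mu + (1 - \<i>) / 2 * twisted_walsh (mu + 1)"
proof -
  have "sgn2 (Qfun n x + trm n (mu * x)) * \<i> ^ wt n alpha x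
      = (1 + \<i>) / 2 * (twisted_sign x * sgn2 (trm n (mu * x)))
        + (1 - \<i>) / 2 * (twisted_sign x * sgn2 (trm n ((mu + 1) * x)))" for x
  proof -
    have untwist: "sgn2 (Qfun n x + trm n (mu * x)) * \<i> ^ wt n alpha x
        = sgn2 (trm n (mu * x)) * twisted_sign x * imag_pow (trm n x)"
      by (simp add: twisted_sign_def sgn2_add[OF CHAR_2] Qfun_in_F2[OF card_UNIV even_n]
          trm_in_F2[OF card_UNIV] ac_simps)
    have shift: "sgn2 (trm n ((mu + 1) * x)) = sgn2 (trm n (mu * x)) * sgn2 (trm n x)"
      by (simp add: distrib_right sgn2_trm_add)
    show ?thesis
      unfolding untwist shift imag_pow_eq_sgn2[OF trm_in_F2[OF card_UNIV]] by (simp add: field_simps)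
  qed
  then show ?thesis
    by (simp add: twisted_walsh_def sum.distrib sum_distrib_left)
qed

lemma bent_Qfun: "bent n (Qfun n :: 'a \<Rightarrow> 'a)"
  by (rule bent_if_polar_nondegenerate[OF Qfun_in_F2[OF card_UNIV even_n] Qfun_polar[OF card_UNIV even_n]
      trm_add_self_eq_0_iff[OF card_UNIV even_n]])

lemma not_negabent_Qfun: "\<not> negabent n alpha (Qfun n :: 'a \<Rightarrow> 'a)"
proof
  assume "negabent n alpha (Qfun n :: 'a \<Rightarrow> 'a)"
  then have negabent: "cmod ((1 + \<i>) / 2 * twisted_walsh mu + (1 - \<i>) / 2 * twisted_walsh (mu + 1)) ^ 2 = 2 ^ n"
    for mu
    by (simp add: negabent_def nega_hadamard_Qfun norm_eq_2_powr_half_iff)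
  obtain v where v: "twisted_walsh v = 2 ^ n"
    using ex_twisted_walsh_eq by blast
  define X :: real where "X = 2 ^ n"
  have "(2::real) ^ 2 \<le> 2 ^ n"
    using exponent_pos[OF card_UNIV] even_n by (intro power_increasing) auto
  then have "X > 2"
    unfolding X_def by simp
  from twisted_walsh_cases[of "v + 1"] show False
  proof
    assume "twisted_walsh (v + 1) = 0"
    then have "(X / 2) ^ 2 + (X / 2) ^ 2 = X"
      using negabent[of v] v by (simp add: X_def cmod_power2 field_simps)
    with \<open>X > 2\<close> show False
      by (simp add: power2_eq_square field_simps)
  next
    assume "twisted_walsh (v + 1) = 2 ^ n"
    then have "X ^ 2 = X"
      using negabent[of v] v by (simp add: X_def cmod_power2 field_simps)
    with \<open>X > 2\<close> show False
      by (simp add: power2_eq_square)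
  qed
qed

end

end

theorem corollary3:
  fixes n :: nat and alpha :: "nat \<Rightarrow> 'a::{field,finite}"
  assumes "even n" and "n \<ge> 2" and "card (UNIV :: 'a set) = 2 ^ n"
    and "self_dual_basis n alpha"
  shows "bent n (Qfun n :: 'a \<Rightarrow> 'a) \<and> \<not> negabent n alpha (Qfun n :: 'a \<Rightarrow> 'a)"
proof -
  interpret self_dual_binary_field n alpha
    using assms(3,4) by unfold_locales
  show ?thesis
    using bent_Qfun not_negabent_Qfun assms(1) by blast
qed

end
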